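(* Let $(X,d)$ be a complete metric space and let $f:\ell_\infty(X)\to X$ satisfy one of the conditions (Q) $L_{s,q}(f)<1$ for some $q\in(0,1)$; (P) $L_{p,q}(f)<(1-q)^{1/p}$ for some $q\in(0,1)$ and $p\in[1,\infty)$. Then $f$ has a generalized contractive fixed point $x_*$. Moreover, for every $x\in\ell_\infty(X)$, with $(x^k)$ the generalized iterates of $f$ at $x$ and $\tilde{x}^0=x$, $\tilde{x}^1=\tilde f(x)$, and every $k\in\mathbb{N}$ (i.e. $k\geq 1$): (i) if $L_{s,q}(f)<1$ for some $q\in(0,1)$, then $$d(x^k,x_* )\le L_{s,q}(f)\frac{\max\{L_{s,q}(f),q\}^{k-1}}{1-\max\{L_{s,q}(f),q\}}\,d_{s,q}(\tilde{x}^1,\tilde{x}^0);$$ (ii) if $L_{p,q}(f)<(1-q)^{1/p}$ for some $q\in(0,1)$, $p\in[1,\infty)$, then $$d(x^k,x_* )\le L_{p,q}(f)\frac{\left((L_{p,q}(f))^p+q\right)^{\frac{k-1}{p}}}{1-\left((L_{p,q}(f))^p+q\right)^{\frac1p}}\,d_{p,q}(\tilde{x}^1,\tilde{x}^0).$$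
   Context: $\mathbb{N}^*=\{0,1,2,\dots\}$; $\ell_\infty(X)$ is the set of all bounded sequences $(x_n)_{n\in\mathbb{N}^*}$ in $X$. For $q\in(0,1]$, $d_{s,q}(x,y):=\sup\{q^n d(x_n,y_n):n\in\mathbb{N}^*\}$; for $q\in(0,1)$, $p\in[1,\infty)$, $d_{p,q}(x,y):=\left(\sum_{n=0}^\infty q^n d^p(x_n,y_n)\right)^{1/p}$. $L_{s,q}(f)$, $L_{p,q}(f)$ are the Lipschitz constants of $f$ with respect to $d_{s,q}$, resp. $d_{p,q}$, on $\ell_\infty(X)$ and $d$ on $X$. $\tilde f:\ell_\infty(X)\to\ell_\infty(X)$ is $\tilde f((x_n))=(f((x_n)),x_0,x_1,\dots)$. For $x\in\ell_\infty(X)$: $\tilde{x}^0:=x$, and for $k\ge1$, $x^k:=f(\tilde{x}^{k-1})$, $\tilde{x}^k:=\tilde f(\tilde{x}^{k-1})$; $(x^k)$ is the sequence of generalized iterates of $f$ at $x$. A generalized fixed point of $f$ is $x_*\in X$ with $f(x_*,x_*,\dots)=x_*$; it is a generalized contractive fixed point (GCFP) if for every $x\in\ell_\infty(X)$ the generalized iterates of $f$ at $x$ converge to $x_*$. *)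

theory Defs
  imports "HOL-Analysis.Analysis"
begin

definition linf :: "(nat \<Rightarrow> 'a::metric_space) set" where
  "linf = {x. bounded (range x)}"

definition d_sq :: "real \<Rightarrow> (nat \<Rightarrow> 'a::metric_space) \<Rightarrow> (nat \<Rightarrow> 'a) \<Rightarrow> real" where
  "d_sq q x y = (SUP n. q ^ n * dist (x n) (y n))"

definition d_pq :: "real \<Rightarrow> real \<Rightarrow> (nat \<Rightarrow> 'a::metric_space) \<Rightarrow> (nat \<Rightarrow> 'a) \<Rightarrow> real" where
  "d_pq p q x y = (\<Sum>n. q ^ n * (dist (x n) (y n)) powr p) powr (1 / p)"

text \<open>Lipschitz constant of f w.r.t. a metric D on ell_infty(X) and dist on X
  (smallest Lipschitz constant; +infinity if f is not Lipschitz).\<close>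
definition lip_const :: "((nat \<Rightarrow> 'a::metric_space) \<Rightarrow> (nat \<Rightarrow> 'a) \<Rightarrow> real) \<Rightarrow> ((nat \<Rightarrow> 'a) \<Rightarrow> 'a) \<Rightarrow> ereal" where
  "lip_const D f = Inf {ereal L | L. 0 \<le> L \<and> (\<forall>x\<in>linf. \<forall>y\<in>linf. dist (f x) (f y) \<le> L * D x y)}"

definition L_sq :: "real \<Rightarrow> ((nat \<Rightarrow> 'a::metric_space) \<Rightarrow> 'a) \<Rightarrow> ereal" where
  "L_sq q f = lip_const (d_sq q) f"

definition L_pq :: "real \<Rightarrow> real \<Rightarrow> ((nat \<Rightarrow> 'a::metric_space) \<Rightarrow> 'a) \<Rightarrow> ereal" where
  "L_pq p q f = lip_const (d_pq p q) f"

definition ftilde :: "((nat \<Rightarrow> 'a) \<Rightarrow> 'a) \<Rightarrow> (nat \<Rightarrow> 'a) \<Rightarrow> (nat \<Rightarrow> 'a)" where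
  "ftilde f x = (\<lambda>n. case n of 0 \<Rightarrow> f x | Suc m \<Rightarrow> x m)"

definition xtilde :: "((nat \<Rightarrow> 'a) \<Rightarrow> 'a) \<Rightarrow> (nat \<Rightarrow> 'a) \<Rightarrow> nat \<Rightarrow> (nat \<Rightarrow> 'a)" where
  "xtilde f x k = (ftilde f ^^ k) x"

definition gen_iter :: "((nat \<Rightarrow> 'a) \<Rightarrow> 'a) \<Rightarrow> (nat \<Rightarrow> 'a) \<Rightarrow> nat \<Rightarrow> 'a" where
  "gen_iter f x k = f (xtilde f x (k - 1))"

definition gen_fixed_point :: "((nat \<Rightarrow> 'a) \<Rightarrow> 'a) \<Rightarrow> 'a \<Rightarrow> bool" where
  "gen_fixed_point f z \<longleftrightarrow> f (\<lambda>_. z) = z"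

text \<open>Convergence of the iterates (indexed k = 1,2,...) to z.\<close>
definition GCFP :: "((nat \<Rightarrow> 'a::metric_space) \<Rightarrow> 'a) \<Rightarrow> 'a \<Rightarrow> bool" where
  "GCFP f z \<longleftrightarrow> gen_fixed_point f z \<and>
     (\<forall>x\<in>linf. (\<lambda>k. gen_iter f x (Suc k)) \<longlonglongrightarrow> z)"

end

theory Submission imports Defs begin

text \<open>The shift map \<open>ftilde f\<close> is a contraction of \<open>\<ell>\<^sub>\<infinity>(X)\<close>: for \<open>d\<^sub>s\<^sub>,\<^sub>q\<close> with constant
  \<open>max L q\<close> and for \<open>d\<^sub>p\<^sub>,\<^sub>q\<close> with constant \<open>(L\<^sup>p + q)\<^sup>1\<^sup>/\<^sup>p\<close>, because the new head contributes
  \<open>d(f x, f y) \<le> L d(x, y)\<close> while the tail is the old sequence with one more factor \<open>q\<close>.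
  Restricted to constant sequences, \<open>f\<close> is a Banach contraction of \<open>X\<close>, which gives \<open>x\<^sub>*\<close>.
  The generalized iterates are \<open>f\<close> applied to the orbit of \<open>ftilde f\<close>, so consecutive ones are
  geometrically close, and summing the geometric tail yields the a priori estimates.\<close>

lemma ftilde_in_linf: "u \<in> linf \<Longrightarrow> ftilde f u \<in> linf"
proof -
  assume "u \<in> linf"
  then have "bounded (insert (f u) (range u))" by (simp add: linf_def)
  moreover have "range (ftilde f u) \<subseteq> insert (f u) (range u)"
    by (auto simp: ftilde_def split: nat.splits)
  ultimately show ?thesis unfolding linf_def using bounded_subset by blast
qed

lemma const_in_linf: "(\<lambda>_. z) \<in> linf"
  by (simp add: linf_def)

lemma xtilde_Suc: "xtilde f x (Suc k) = ftilde f (xtilde f x k)"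
  by (simp add: xtilde_def)

lemma xtilde_in_linf: "x \<in> linf \<Longrightarrow> xtilde f x k \<in> linf"
  by (induction k) (simp_all add: xtilde_def ftilde_in_linf)

lemma ftilde_const: "f (\<lambda>_. z) = z \<Longrightarrow> ftilde f (\<lambda>_. z) = (\<lambda>_. z)"
  by (auto simp: ftilde_def split: nat.splits)

lemma dist_limit_le_geometric:
  fixes a :: "nat \<Rightarrow> 'a::metric_space"
  assumes lim: "a \<longlonglongrightarrow> z" and step: "\<And>j. dist (a (Suc j)) (a j) \<le> c * r ^ j"
    and "0 \<le> c" "0 \<le> r" "r < 1"
  shows "dist (a k) z \<le> c * r ^ k / (1 - r)"
proof -
  have partial: "dist (a k) (a (k + m)) \<le> c * r ^ k * (1 - r ^ m) / (1 - r)" for m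
  proof (induction m)
    case (Suc m)
    have "dist (a k) (a (k + Suc m)) \<le> dist (a k) (a (k + m)) + dist (a (Suc (k + m))) (a (k + m))"
      by (metis add_Suc_right dist_triangle2)
    also have "\<dots> \<le> c * r ^ k * (1 - r ^ m) / (1 - r) + c * r ^ (k + m)"
      using Suc step[of "k + m"] by linarith
    also have "\<dots> = c * r ^ k * (1 - r ^ Suc m) / (1 - r)"
      using assms by (simp add: field_simps power_add)
    finally show ?case .
  qed simp
  have "(\<lambda>m. dist (a k) (a (k + m))) \<longlonglongrightarrow> dist (a k) z"
    using LIMSEQ_ignore_initial_segment[OF lim, of k]
    by (intro tendsto_intros) (simp_all add: add.commute)
  moreover have "dist (a k) (a (k + m)) \<le> c * r ^ k / (1 - r)" for m
  proof -
    have "c * r ^ k * (1 - r ^ m) \<le> c * r ^ k"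
      using assms by (simp add: mult_left_le zero_le_power)
    then have "c * r ^ k * (1 - r ^ m) / (1 - r) \<le> c * r ^ k / (1 - r)"
      using assms by (intro divide_right_mono) auto
    then show ?thesis using partial[of m] by linarith
  qed
  ultimately show ?thesis by (intro LIMSEQ_le_const2) auto
qed

lemma lip_const_less_ereal:
  fixes f :: "(nat \<Rightarrow> 'a::metric_space) \<Rightarrow> 'a"
  assumes D_nonneg: "\<And>u v. u \<in> linf \<Longrightarrow> v \<in> linf \<Longrightarrow> 0 \<le> D u v"
    and less: "lip_const D f < ereal B"
  shows "0 \<le> real_of_ereal (lip_const D f)" "real_of_ereal (lip_const D f) < B"
    and "\<And>x y. x \<in> linf \<Longrightarrow> y \<in> linf \<Longrightarrow>
           dist (f x) (f y) \<le> real_of_ereal (lip_const D f) * D x y"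
proof -
  define S where "S = {ereal L | L. 0 \<le> L \<and> (\<forall>x\<in>linf. \<forall>y\<in>linf. dist (f x) (f y) \<le> L * D x y)}"
  have lip_const_eq: "lip_const D f = Inf S" unfolding S_def lip_const_def ..
  have "0 \<le> Inf S" unfolding S_def by (rule Inf_greatest) auto
  then obtain r where r: "Inf S = ereal r" "0 \<le> r"
    using less lip_const_eq by (cases "Inf S") auto
  then have r_eq: "real_of_ereal (lip_const D f) = r" using lip_const_eq by simp
  show "0 \<le> real_of_ereal (lip_const D f)" "real_of_ereal (lip_const D f) < B"
    using r r_eq lip_const_eq less by auto
  fix x y :: "nat \<Rightarrow> 'a" assume x: "x \<in> linf" and y: "y \<in> linf"
  have above: "dist (f x) (f y) \<le> L' * D x y" if "r < L'" for L'
  proof -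
    have "Inf S < ereal L'" using r that by simp
    then obtain L where L: "ereal L \<in> S" "L < L'" by (auto simp: Inf_less_iff S_def)
    then have "dist (f x) (f y) \<le> L * D x y" using x y by (auto simp: S_def)
    also have "\<dots> \<le> L' * D x y" using L(2) D_nonneg[OF x y] by (intro mult_right_mono) auto
    finally show ?thesis .
  qed
  show "dist (f x) (f y) \<le> real_of_ereal (lip_const D f) * D x y"
  proof (cases "D x y = 0")
    case True
    then show ?thesis using above[of "r + 1"] by simp
  next
    case False
    then have D_pos: "0 < D x y" using D_nonneg[OF x y] by simp
    have "dist (f x) (f y) / D x y \<le> r"
      by (rule dense_ge) (use above D_pos in \<open>simp add: divide_le_eq\<close>)
    then show ?thesis using D_pos r_eq by (simp add: divide_le_eq)
  qed
qed

lemma const_fixed_point_exists: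
  fixes f :: "(nat \<Rightarrow> 'a::complete_space) \<Rightarrow> 'a"
  assumes lipschitz: "\<And>u v. u \<in> linf \<Longrightarrow> v \<in> linf \<Longrightarrow> dist (f u) (f v) \<le> L * D u v"
    and D_const: "\<And>w w'. D (\<lambda>_. w) (\<lambda>_. w') \<le> C * dist w w'"
    and "0 \<le> L" "0 \<le> L * C" "L * C < 1"
  shows "\<exists>z. f (\<lambda>_. z) = z"
proof -
  have "dist (f (\<lambda>_. w)) (f (\<lambda>_. w')) \<le> L * C * dist w w'" for w w' :: 'a
  proof -
    have "dist (f (\<lambda>_. w)) (f (\<lambda>_. w')) \<le> L * D (\<lambda>_. w) (\<lambda>_. w')"
      by (rule lipschitz[OF const_in_linf const_in_linf])
    also have "\<dots> \<le> L * (C * dist w w')" using D_const \<open>0 \<le> L\<close> by (rule mult_left_mono)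
    finally show ?thesis by (simp add: mult.assoc)
  qed
  then have "\<exists>!z. f (\<lambda>_. z) = z"
    using banach_fix_type[of "L * C" "\<lambda>w. f (\<lambda>_. w)"] assms by blast
  then show ?thesis by blast
qed

locale tilde_contraction =
  fixes f :: "(nat \<Rightarrow> 'a::metric_space) \<Rightarrow> 'a"
    and D :: "(nat \<Rightarrow> 'a) \<Rightarrow> (nat \<Rightarrow> 'a) \<Rightarrow> real" and L M :: real
  assumes D_nonneg: "\<And>u v. u \<in> linf \<Longrightarrow> v \<in> linf \<Longrightarrow> 0 \<le> D u v"
    and lipschitz: "\<And>u v. u \<in> linf \<Longrightarrow> v \<in> linf \<Longrightarrow> dist (f u) (f v) \<le> L * D u v"
    and ftilde_contraction:
      "\<And>u v. u \<in> linf \<Longrightarrow> v \<in> linf \<Longrightarrow> D (ftilde f u) (ftilde f v) \<le> M * D u v"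
    and L_nonneg: "0 \<le> L" and M_nonneg: "0 \<le> M" and M_less_1: "M < 1"
begin

lemma xtilde_dist_fixed_point:
  assumes fp: "f (\<lambda>_. z) = z" and x: "x \<in> linf"
  shows "D (xtilde f x k) (\<lambda>_. z) \<le> M ^ k * D x (\<lambda>_. z)"
proof (induction k)
  case (Suc k)
  have "D (xtilde f x (Suc k)) (\<lambda>_. z) = D (ftilde f (xtilde f x k)) (ftilde f (\<lambda>_. z))"
    by (simp add: xtilde_Suc ftilde_const[of f z, OF fp])
  also have "\<dots> \<le> M * D (xtilde f x k) (\<lambda>_. z)"
    by (rule ftilde_contraction[OF xtilde_in_linf[OF x] const_in_linf])
  also have "\<dots> \<le> M * (M ^ k * D x (\<lambda>_. z))" using Suc M_nonneg by (rule mult_left_mono)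
  finally show ?case by simp
qed (simp add: xtilde_def)

lemma xtilde_dist_Suc:
  assumes x: "x \<in> linf"
  shows "D (xtilde f x (Suc k)) (xtilde f x k) \<le> M ^ k * D (xtilde f x 1) (xtilde f x 0)"
proof (induction k)
  case (Suc k)
  have "D (xtilde f x (Suc (Suc k))) (xtilde f x (Suc k))
      = D (ftilde f (xtilde f x (Suc k))) (ftilde f (xtilde f x k))"
    by (simp only: xtilde_Suc)
  also have "\<dots> \<le> M * D (xtilde f x (Suc k)) (xtilde f x k)"
    by (rule ftilde_contraction[OF xtilde_in_linf[OF x] xtilde_in_linf[OF x]])
  also have "\<dots> \<le> M * (M ^ k * D (xtilde f x 1) (xtilde f x 0))"
    using Suc M_nonneg by (rule mult_left_mono)
  finally show ?case by simp
qed simp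

lemma gen_iter_LIMSEQ:
  assumes fp: "f (\<lambda>_. z) = z" and x: "x \<in> linf"
  shows "(\<lambda>k. gen_iter f x (Suc k)) \<longlonglongrightarrow> z"
proof -
  have bound: "dist (gen_iter f x (Suc k)) z \<le> L * (M ^ k * D x (\<lambda>_. z))" for k
  proof -
    have "dist (gen_iter f x (Suc k)) z = dist (f (xtilde f x k)) (f (\<lambda>_. z))"
      by (simp add: gen_iter_def fp)
    also have "\<dots> \<le> L * D (xtilde f x k) (\<lambda>_. z)"
      by (rule lipschitz[OF xtilde_in_linf[OF x] const_in_linf])
    also have "\<dots> \<le> L * (M ^ k * D x (\<lambda>_. z))"
      using xtilde_dist_fixed_point[OF fp x] L_nonneg by (rule mult_left_mono)
    finally show ?thesis .
  qed
  have "(\<lambda>k. L * (M ^ k * D x (\<lambda>_. z))) \<longlonglongrightarrow> 0"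
    using M_nonneg M_less_1
    by (intro tendsto_mult_right_zero tendsto_mult_left_zero LIMSEQ_power_zero) simp
  then have "(\<lambda>k. dist (gen_iter f x (Suc k)) z) \<longlonglongrightarrow> 0"
    by (rule Lim_null_comparison[rotated]) (use bound in \<open>auto intro: always_eventually\<close>)
  then show ?thesis using tendsto_dist_iff by blast
qed

lemma gen_iter_error_bound:
  assumes fp: "f (\<lambda>_. z) = z" and x: "x \<in> linf" and k: "1 \<le> k"
  shows "dist (gen_iter f x k) z \<le> L * M ^ (k - 1) / (1 - M) * D (xtilde f x 1) (xtilde f x 0)"
proof -
  define c where "c = L * D (xtilde f x 1) (xtilde f x 0)"
  have step: "dist (gen_iter f x (Suc (Suc j))) (gen_iter f x (Suc j)) \<le> c * M ^ j" for j
  proof -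
    have "dist (gen_iter f x (Suc (Suc j))) (gen_iter f x (Suc j))
        = dist (f (xtilde f x (Suc j))) (f (xtilde f x j))"
      by (simp add: gen_iter_def)
    also have "\<dots> \<le> L * D (xtilde f x (Suc j)) (xtilde f x j)"
      by (rule lipschitz[OF xtilde_in_linf[OF x] xtilde_in_linf[OF x]])
    also have "\<dots> \<le> L * (M ^ j * D (xtilde f x 1) (xtilde f x 0))"
      using xtilde_dist_Suc[OF x] L_nonneg by (rule mult_left_mono)
    finally show ?thesis by (simp add: c_def ac_simps)
  qed
  have "0 \<le> c"
    unfolding c_def using L_nonneg D_nonneg[OF xtilde_in_linf[OF x] xtilde_in_linf[OF x]] by simp
  from k obtain j where "k = Suc j" by (cases k) auto
  with dist_limit_le_geometric[OF gen_iter_LIMSEQ[OF fp x] step \<open>0 \<le> c\<close> M_nonneg M_less_1, of j]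
  show ?thesis by (simp add: c_def ac_simps)
qed

end

lemma linf_dist_bounded:
  assumes "u \<in> linf" "v \<in> linf"
  obtains B where "\<And>n. dist (u n) (v n) \<le> B"
proof -
  obtain e1 where e1: "\<forall>y\<in>range u. dist (u 0) y \<le> e1"
    using assms bounded_any_center[of "range u" "u 0"] by (auto simp: linf_def)
  obtain e2 where e2: "\<forall>y\<in>range v. dist (u 0) y \<le> e2"
    using assms bounded_any_center[of "range v" "u 0"] by (auto simp: linf_def)
  have "dist (u n) (v n) \<le> e1 + e2" for n
  proof -
    have "dist (u 0) (u n) \<le> e1" "dist (u 0) (v n) \<le> e2" using e1 e2 by auto
    then show ?thesis using dist_triangle3[of "u n" "v n" "u 0"] by linarith
  qed
  then show ?thesis using that by blast
qed

subsection \<open>The weighted supremum metric\<close>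

lemma d_sq_bdd_above:
  assumes "u \<in> linf" "v \<in> linf" "0 < q" "q \<le> 1"
  shows "bdd_above (range (\<lambda>n. q ^ n * dist (u n) (v n)))"
proof -
  obtain B where B: "\<And>n. dist (u n) (v n) \<le> B" using linf_dist_bounded assms by blast
  have "q ^ n * dist (u n) (v n) \<le> B" for n
  proof -
    have "q ^ n * dist (u n) (v n) \<le> 1 * dist (u n) (v n)"
      using assms by (intro mult_right_mono) (simp_all add: power_le_one)
    then show ?thesis using B[of n] by simp
  qed
  then show ?thesis by (intro bdd_aboveI2) auto
qed

lemma d_sq_upper:
  assumes "u \<in> linf" "v \<in> linf" "0 < q" "q \<le> 1"
  shows "q ^ n * dist (u n) (v n) \<le> d_sq q u v"
  unfolding d_sq_def by (rule cSUP_upper[OF _ d_sq_bdd_above[OF assms]]) simp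

lemma d_sq_nonneg:
  assumes "u \<in> linf" "v \<in> linf" "0 < q" "q \<le> 1"
  shows "0 \<le> d_sq q u v"
  using d_sq_upper[OF assms, of 0] zero_le_dist[of "u 0" "v 0"] by (simp del: zero_le_dist)

lemma d_sq_ftilde_le:
  assumes u: "u \<in> linf" and v: "v \<in> linf" and q: "0 < q" "q \<le> 1"
    and lipschitz: "dist (f u) (f v) \<le> L * d_sq q u v"
  shows "d_sq q (ftilde f u) (ftilde f v) \<le> max L q * d_sq q u v"
  unfolding d_sq_def[of q "ftilde f u"]
proof (rule cSUP_least)
  fix n
  have D_nonneg: "0 \<le> d_sq q u v" using d_sq_nonneg[OF u v q] .
  show "q ^ n * dist (ftilde f u n) (ftilde f v n) \<le> max L q * d_sq q u v"
  proof (cases n)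
    case 0
    have "L * d_sq q u v \<le> max L q * d_sq q u v" using D_nonneg by (intro mult_right_mono) auto
    then show ?thesis using lipschitz 0 by (simp add: ftilde_def)
  next
    case (Suc m)
    have "q ^ n * dist (ftilde f u n) (ftilde f v n) = q * (q ^ m * dist (u m) (v m))"
      using Suc by (simp add: ftilde_def)
    also have "\<dots> \<le> q * d_sq q u v" using d_sq_upper[OF u v q] q by (intro mult_left_mono) auto
    also have "\<dots> \<le> max L q * d_sq q u v" using D_nonneg by (intro mult_right_mono) auto
    finally show ?thesis .
  qed
qed simp

lemma d_sq_const_le:
  assumes "0 < q" "q \<le> 1"
  shows "d_sq q (\<lambda>_. w) (\<lambda>_. w') \<le> dist w w'"
  unfolding d_sq_def
proof (rule cSUP_least)
  fix n :: nat
  have "q ^ n \<le> 1" using assms by (simp add: power_le_one)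
  then show "q ^ n * dist w w' \<le> dist w w'" using assms by (intro mult_left_le_one_le) auto
qed simp

lemma L_sq_lipschitz:
  fixes f :: "(nat \<Rightarrow> 'a::metric_space) \<Rightarrow> 'a"
  assumes "0 < q" "q < 1" "L_sq q f < 1"
  shows "0 \<le> real_of_ereal (L_sq q f)" "real_of_ereal (L_sq q f) < 1"
    and "\<And>u v. u \<in> linf \<Longrightarrow> v \<in> linf \<Longrightarrow> dist (f u) (f v) \<le> real_of_ereal (L_sq q f) * d_sq q u v"
  using lip_const_less_ereal[of "d_sq q" f 1] assms d_sq_nonneg[of _ _ q]
  by (auto simp: L_sq_def one_ereal_def)

lemma tilde_contraction_d_sq:
  fixes f :: "(nat \<Rightarrow> 'a::metric_space) \<Rightarrow> 'a"
  assumes q: "0 < q" "q < 1" and less: "L_sq q f < 1"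
  shows "tilde_contraction f (d_sq q) (real_of_ereal (L_sq q f)) (max (real_of_ereal (L_sq q f)) q)"
  using L_sq_lipschitz[OF q less] q
  by unfold_locales (auto intro: d_sq_nonneg d_sq_ftilde_le)

lemma L_sq_fixed_point_exists:
  fixes f :: "(nat \<Rightarrow> 'a::complete_space) \<Rightarrow> 'a"
  assumes q: "0 < q" "q < 1" and less: "L_sq q f < 1"
  shows "\<exists>z. f (\<lambda>_. z) = z"
  using L_sq_lipschitz[OF q less] d_sq_const_le[of q] q
  by (intro const_fixed_point_exists[where D = "d_sq q" and C = 1]) auto

lemma L_sq_error_bound:
  fixes f :: "(nat \<Rightarrow> 'a::metric_space) \<Rightarrow> 'a"
  assumes q: "0 < q" "q < 1" and less: "L_sq q f < 1"
    and fp: "f (\<lambda>_. z) = z" and x: "x \<in> linf" and k: "1 \<le> k"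
  shows "dist (gen_iter f x k) z \<le> real_of_ereal (L_sq q f)
      * max (real_of_ereal (L_sq q f)) q ^ (k - 1) / (1 - max (real_of_ereal (L_sq q f)) q)
      * d_sq q (xtilde f x 1) (xtilde f x 0)"
  using tilde_contraction.gen_iter_error_bound[OF tilde_contraction_d_sq[OF q less] fp x k] .

subsection \<open>The weighted \<open>p\<close>-sum metric\<close>

lemma d_pq_summable:
  assumes "u \<in> linf" "v \<in> linf" "0 < q" "q < 1" "0 < p"
  shows "summable (\<lambda>n. q ^ n * dist (u n) (v n) powr p)"
proof -
  obtain B where B: "\<And>n. dist (u n) (v n) \<le> B" using linf_dist_bounded assms by blast
  have "summable (\<lambda>n. B powr p * q ^ n)" using assms by (intro summable_mult summable_geometric) simp
  moreover have "norm (q ^ n * dist (u n) (v n) powr p) \<le> B powr p * q ^ n" for n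
  proof -
    have "dist (u n) (v n) powr p \<le> B powr p" using B assms by (intro powr_mono2) auto
    then show ?thesis using assms by (simp add: mult.commute mult_right_mono)
  qed
  ultimately show ?thesis by (rule summable_comparison_test'[where N = 0])
qed

lemma d_pq_ftilde_sum:
  assumes u: "u \<in> linf" and v: "v \<in> linf" and q: "0 < q" "q < 1" and p: "0 < p"
  shows "(\<Sum>n. q ^ n * dist (ftilde f u n) (ftilde f v n) powr p) =
    dist (f u) (f v) powr p + q * (\<Sum>n. q ^ n * dist (u n) (v n) powr p)"
proof -
  let ?g = "\<lambda>n. q ^ n * dist (ftilde f u n) (ftilde f v n) powr p"
  have "(\<Sum>n. ?g (Suc n)) = suminf ?g - ?g 0"
    by (rule suminf_split_head[OF d_pq_summable[OF ftilde_in_linf[OF u] ftilde_in_linf[OF v] q p]])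
  moreover have "(\<lambda>n. ?g (Suc n)) = (\<lambda>n. q * (q ^ n * dist (u n) (v n) powr p))"
    by (simp add: ftilde_def mult.assoc)
  moreover have "(\<Sum>n. q * (q ^ n * dist (u n) (v n) powr p)) = q * (\<Sum>n. q ^ n * dist (u n) (v n) powr p)"
    by (rule suminf_mult[OF d_pq_summable[OF u v q p]])
  ultimately show ?thesis by (simp add: ftilde_def)
qed

lemma d_pq_ftilde_le:
  assumes u: "u \<in> linf" and v: "v \<in> linf" and q: "0 < q" "q < 1" and p: "0 < p" and L: "0 \<le> L"
    and lipschitz: "dist (f u) (f v) \<le> L * d_pq p q u v"
  shows "d_pq p q (ftilde f u) (ftilde f v) \<le> (L powr p + q) powr (1 / p) * d_pq p q u v"
proof -
  define S where "S = (\<Sum>n. q ^ n * dist (u n) (v n) powr p)"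
  have S_nonneg: "0 \<le> S" unfolding S_def using q by (intro suminf_nonneg d_pq_summable[OF u v q p]) auto
  have d_pq_eq: "d_pq p q u v = S powr (1 / p)" by (simp add: d_pq_def S_def)
  have "dist (f u) (f v) powr p \<le> (L * S powr (1 / p)) powr p"
    using lipschitz d_pq_eq p by (intro powr_mono2) auto
  also have "\<dots> = L powr p * S"
    using L S_nonneg p by (simp add: powr_mult powr_powr)
  finally have head: "dist (f u) (f v) powr p \<le> L powr p * S" .
  have "d_pq p q (ftilde f u) (ftilde f v) = (dist (f u) (f v) powr p + q * S) powr (1 / p)"
    unfolding d_pq_def d_pq_ftilde_sum[OF u v q p] S_def ..
  also have "\<dots> \<le> ((L powr p + q) * S) powr (1 / p)"
    using head q S_nonneg p by (intro powr_mono2) (auto simp: algebra_simps)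
  also have "\<dots> = (L powr p + q) powr (1 / p) * d_pq p q u v"
    using q S_nonneg d_pq_eq by (simp add: powr_mult)
  finally show ?thesis .
qed

lemma d_pq_const:
  assumes "0 < q" "q < 1" "0 < p"
  shows "d_pq p q (\<lambda>_. w) (\<lambda>_. w') = dist w w' * (1 / (1 - q)) powr (1 / p)"
proof -
  have "(\<Sum>n. q ^ n * dist w w' powr p) = dist w w' powr p * (1 / (1 - q))"
    using assms by (simp add: suminf_mult2[symmetric] summable_geometric suminf_geometric mult.commute)
  then have "d_pq p q (\<lambda>_. w) (\<lambda>_. w') = (dist w w' powr p * (1 / (1 - q))) powr (1 / p)"
    by (simp add: d_pq_def)
  also have "\<dots> = (dist w w' powr p) powr (1 / p) * (1 / (1 - q)) powr (1 / p)"
    by (rule powr_mult)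
  also have "\<dots> = dist w w' * (1 / (1 - q)) powr (1 / p)"
    using assms by (simp add: powr_powr)
  finally show ?thesis .
qed

lemma L_pq_lipschitz:
  fixes f :: "(nat \<Rightarrow> 'a::metric_space) \<Rightarrow> 'a"
  assumes "L_pq p q f < ereal ((1 - q) powr (1 / p))"
  shows "0 \<le> real_of_ereal (L_pq p q f)" "real_of_ereal (L_pq p q f) < (1 - q) powr (1 / p)"
    and "\<And>u v. u \<in> linf \<Longrightarrow> v \<in> linf \<Longrightarrow> dist (f u) (f v) \<le> real_of_ereal (L_pq p q f) * d_pq p q u v"
  using lip_const_less_ereal[of "d_pq p q" f] assms by (auto simp: L_pq_def d_pq_def)

lemma L_pq_powr_plus_less_1:
  assumes q: "0 < q" "q < 1" and p: "1 \<le> p" and less: "L_pq p q f < ereal ((1 - q) powr (1 / p))"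
  shows "real_of_ereal (L_pq p q f) powr p + q < 1"
proof -
  note L = L_pq_lipschitz[OF less]
  have "real_of_ereal (L_pq p q f) powr p < ((1 - q) powr (1 / p)) powr p"
    using L p by (intro powr_less_mono2) auto
  also have "\<dots> = 1 - q" using q p by (simp add: powr_powr)
  finally show ?thesis by simp
qed

lemma tilde_contraction_d_pq:
  fixes f :: "(nat \<Rightarrow> 'a::metric_space) \<Rightarrow> 'a"
  assumes q: "0 < q" "q < 1" and p: "1 \<le> p" and less: "L_pq p q f < ereal ((1 - q) powr (1 / p))"
  shows "tilde_contraction f (d_pq p q) (real_of_ereal (L_pq p q f))
           ((real_of_ereal (L_pq p q f) powr p + q) powr (1 / p))"
proof -
  note L = L_pq_lipschitz[OF less]
  have M_less_1: "(real_of_ereal (L_pq p q f) powr p + q) powr (1 / p) < 1 powr (1 / p)"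
    using L_pq_powr_plus_less_1[OF q p less] q p by (intro powr_less_mono2) auto
  show ?thesis
  proof unfold_locales
    fix u v :: "nat \<Rightarrow> 'a" assume u: "u \<in> linf" and v: "v \<in> linf"
    show "0 \<le> d_pq p q u v" by (simp add: d_pq_def)
    show "dist (f u) (f v) \<le> real_of_ereal (L_pq p q f) * d_pq p q u v" by (rule L(3)[OF u v])
    show "d_pq p q (ftilde f u) (ftilde f v)
        \<le> (real_of_ereal (L_pq p q f) powr p + q) powr (1 / p) * d_pq p q u v"
      using p by (intro d_pq_ftilde_le[OF u v q _ L(1) L(3)[OF u v]]) auto
  qed (use L M_less_1 in auto)
qed

lemma L_pq_fixed_point_exists:
  fixes f :: "(nat \<Rightarrow> 'a::complete_space) \<Rightarrow> 'a"
  assumes q: "0 < q" "q < 1" and p: "1 \<le> p" and less: "L_pq p q f < ereal ((1 - q) powr (1 / p))"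
  shows "\<exists>z. f (\<lambda>_. z) = z"
proof -
  note L = L_pq_lipschitz[OF less]
  \<comment> \<open>On constant sequences \<open>d\<^sub>p\<^sub>,\<^sub>q\<close> is \<open>(1 - q)\<^sup>-\<^sup>1\<^sup>/\<^sup>p\<close> times \<open>d\<close>; hypothesis (P) compensates exactly.\<close>
  define C where "C = (1 / (1 - q)) powr (1 / p)"
  have "0 < (1 - q) powr (1 / p)" using q by simp
  then have "real_of_ereal (L_pq p q f) * C = real_of_ereal (L_pq p q f) / (1 - q) powr (1 / p)"
    unfolding C_def using q by (simp add: powr_divide)
  then have "real_of_ereal (L_pq p q f) * C < 1" "0 \<le> real_of_ereal (L_pq p q f) * C"
    using L \<open>0 < (1 - q) powr (1 / p)\<close> by simp_all
  moreover have "d_pq p q (\<lambda>_. w) (\<lambda>_. w') \<le> C * dist w w'" for w w' :: 'a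
    using d_pq_const[OF q, of p w w'] p by (simp add: C_def)
  ultimately show ?thesis using L by (intro const_fixed_point_exists[where D = "d_pq p q"]) auto
qed

lemma L_pq_error_bound:
  fixes f :: "(nat \<Rightarrow> 'a::metric_space) \<Rightarrow> 'a"
  assumes q: "0 < q" "q < 1" and p: "1 \<le> p" and less: "L_pq p q f < ereal ((1 - q) powr (1 / p))"
    and fp: "f (\<lambda>_. z) = z" and x: "x \<in> linf" and k: "1 \<le> k"
  defines "L \<equiv> real_of_ereal (L_pq p q f)" and "N \<equiv> real_of_ereal (L_pq p q f) powr p + q"
  shows "dist (gen_iter f x k) z \<le> L * N powr ((real k - 1) / p) / (1 - N powr (1 / p))
           * d_pq p q (xtilde f x 1) (xtilde f x 0)"
proof -
  have "0 < N" unfolding N_def using q by (simp add: add_nonneg_pos)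
  then have "(N powr (1 / p)) ^ (k - 1) = N powr ((real k - 1) / p)"
    using k by (simp add: powr_realpow[symmetric] powr_powr of_nat_diff)
  then show ?thesis
    using tilde_contraction.gen_iter_error_bound[OF tilde_contraction_d_pq[OF q p less] fp x k]
    unfolding L_def N_def by simp
qed

theorem mainTheorem11:
  fixes f :: "(nat \<Rightarrow> 'a::complete_space) \<Rightarrow> 'a"
  assumes cond: "(\<exists>q. 0 < q \<and> q < 1 \<and> L_sq q f < 1) \<or>
                 (\<exists>q p. 0 < q \<and> q < 1 \<and> 1 \<le> p \<and> L_pq p q f < ereal ((1 - q) powr (1 / p)))"
  shows "\<exists>z. GCFP f z \<and>
    (\<forall>x\<in>linf. \<forall>k::nat. k \<ge> 1 \<longrightarrow>
       (\<forall>q. 0 < q \<and> q < 1 \<and> L_sq q f < 1 \<longrightarrow>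
          (let L = real_of_ereal (L_sq q f); M = max L q in
           dist (gen_iter f x k) z \<le> L * M ^ (k - 1) / (1 - M) * d_sq q (xtilde f x 1) (xtilde f x 0))) \<and>
       (\<forall>q p. 0 < q \<and> q < 1 \<and> 1 \<le> p \<and> L_pq p q f < ereal ((1 - q) powr (1 / p)) \<longrightarrow>
          (let L = real_of_ereal (L_pq p q f); M = L powr p + q in
           dist (gen_iter f x k) z \<le> L * M powr ((real k - 1) / p) / (1 - M powr (1 / p))
              * d_pq p q (xtilde f x 1) (xtilde f x 0))))"
proof -
  \<comment> \<open>The error bounds hold at every generalized fixed point, so this single \<open>z\<close>
     serves all admissible \<open>q\<close> and \<open>p\<close>, not only the one it was obtained from.\<close>
  obtain z where fp: "f (\<lambda>_. z) = z"
    using cond L_sq_fixed_point_exists L_pq_fixed_point_exists by blast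
  have "(\<lambda>k. gen_iter f x (Suc k)) \<longlonglongrightarrow> z" if x: "x \<in> linf" for x
    using cond
  proof (elim disjE exE conjE)
    fix q assume "0 < q" "q < 1" "L_sq q f < 1"
    with fp x show ?thesis
      by (intro tilde_contraction.gen_iter_LIMSEQ[OF tilde_contraction_d_sq])
  next
    fix q p assume "0 < q" "q < 1" "1 \<le> p" "L_pq p q f < ereal ((1 - q) powr (1 / p))"
    with fp x show ?thesis
      by (intro tilde_contraction.gen_iter_LIMSEQ[OF tilde_contraction_d_pq])
  qed
  then have "GCFP f z" using fp by (simp add: GCFP_def gen_fixed_point_def)
  moreover note L_sq_error_bound[where z = z] L_pq_error_bound[where z = z]
  ultimately show ?thesis using fp unfolding Let_def by blast
qed

end
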